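(* Let $P$ be any protocol achieving sender anonymity among $n$ players in which the only resources available to the players are pairwise shared secret key bits, a reliable broadcast channel and public (classical) communication. If a set $T$ of $t$ players is such that deleting the corresponding $t$ nodes from the key-sharing graph $G=(V,E)$ disconnects it (i.e. leaves at least two nonempty parts with no edge between them), then a collusion of these $t$ players can break the sender's anonymity.
   Context: The key-sharing graph of the protocol is the undirected graph $G=(V,E)$ whose nodes are the players, with an edge between nodes $i$ and $j$ iff $i$ and $j$ share one bit of secret key $r_{i,j}$. Sender anonymity: for an adversary corrupting a set of $t\le n-2$ players not including the sender $s$ and observing all communication $C$ and the randomness $G^t$ of the corrupted players, $\max_S\Pr[S=s\mid G^t,C]=\max_S\Pr[S=s]=1/(n-t)$, the maximum over random variables $S$ depending only on $C$ and $G^t$. The adversary is computationally unbounded and monitors all physical transmissions. *)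

theory Defs
  imports "HOL-Probability.Probability"
begin

text \<open>
  Undirected edges are 2-element sets of players.  A key assignment kappa gives the
  shared bit of every edge in E (and is False outside E).  Keys are uniform.
\<close>

definition key_graph :: "nat \<Rightarrow> nat set set \<Rightarrow> bool" where
  "key_graph n E \<longleftrightarrow> (\<forall>e\<in>E. \<exists>i j. e = {i, j} \<and> i \<noteq> j \<and> i < n \<and> j < n)"

definition key_assignments :: "nat set set \<Rightarrow> (nat set \<Rightarrow> bool) set" where
  "key_assignments E = {\<kappa>. \<forall>e. e \<notin> E \<longrightarrow> \<kappa> e = False}"

definition key_view :: "nat set set \<Rightarrow> (nat set \<Rightarrow> bool) \<Rightarrow> nat \<Rightarrow> (nat set \<Rightarrow> bool)" where
  "key_view E \<kappa> i = (\<lambda>e. if e \<in> E \<and> i \<in> e then \<kappa> e else False)"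

definition coalition_view :: "nat set set \<Rightarrow> nat set \<Rightarrow> (nat set \<Rightarrow> bool) \<Rightarrow> (nat set \<Rightarrow> bool)" where
  "coalition_view E T \<kappa> = (\<lambda>e. if e \<in> E \<and> e \<inter> T \<noteq> {} then \<kappa> e else False)"

text \<open>
  A protocol is a next-message function P: in round k, player i broadcasts
  P k i input keys history, where input is Some m for the sender (message m)
  and None otherwise, keys is the player's key view, and history is the public
  transcript so far (one list of n broadcast symbols per round).
  transcript P n E s m kappa R is the public communication C after R rounds.
\<close>
fun transcript ::
  "(nat \<Rightarrow> nat \<Rightarrow> 'm option \<Rightarrow> (nat set \<Rightarrow> bool) \<Rightarrow> 'c list list \<Rightarrow> 'c)
   \<Rightarrow> nat \<Rightarrow> nat set set \<Rightarrow> nat \<Rightarrow> 'm \<Rightarrow> (nat set \<Rightarrow> bool) \<Rightarrow> nat \<Rightarrow> 'c list list" where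
  "transcript P n E s m \<kappa> 0 = []"
| "transcript P n E s m \<kappa> (Suc k) =
     (let h = transcript P n E s m \<kappa> k
      in h @ [map (\<lambda>i. P k i (if i = s then Some m else None) (key_view E \<kappa> i) h) [0..<n]])"

definition transmits :: "(nat \<Rightarrow> nat \<Rightarrow> 'm option \<Rightarrow> (nat set \<Rightarrow> bool) \<Rightarrow> 'c list list \<Rightarrow> 'c)
   \<Rightarrow> nat \<Rightarrow> nat \<Rightarrow> nat set set \<Rightarrow> 'm set \<Rightarrow> bool" where
  "transmits P R n E M \<longleftrightarrow>
     (\<exists>dec. \<forall>s<n. \<forall>m\<in>M. \<forall>\<kappa>\<in>key_assignments E. dec (transcript P n E s m \<kappa> R) = m)"

definition adv_experiment ::
  "(nat \<Rightarrow> nat \<Rightarrow> 'm option \<Rightarrow> (nat set \<Rightarrow> bool) \<Rightarrow> 'c list list \<Rightarrow> 'c)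
   \<Rightarrow> nat \<Rightarrow> nat \<Rightarrow> nat set set \<Rightarrow> nat set \<Rightarrow> 'm
   \<Rightarrow> (nat \<times> 'c list list \<times> (nat set \<Rightarrow> bool)) pmf" where
  "adv_experiment P R n E T m =
     do { s \<leftarrow> pmf_of_set ({0..<n} - T);
          \<kappa> \<leftarrow> pmf_of_set (key_assignments E);
          return_pmf (s, transcript P n E s m \<kappa> R, coalition_view E T \<kappa>) }"

definition guess_prob ::
  "(nat \<Rightarrow> nat \<Rightarrow> 'm option \<Rightarrow> (nat set \<Rightarrow> bool) \<Rightarrow> 'c list list \<Rightarrow> 'c)
   \<Rightarrow> nat \<Rightarrow> nat \<Rightarrow> nat set set \<Rightarrow> nat set \<Rightarrow> 'm
   \<Rightarrow> ('c list list \<Rightarrow> (nat set \<Rightarrow> bool) \<Rightarrow> nat) \<Rightarrow> real" where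
  "guess_prob P R n E T m S =
     measure_pmf.prob (adv_experiment P R n E T m) {(s, C, g). S C g = s}"

text \<open>Sender anonymity against the coalition T:
  max_S Pr[S = s | G^t, C] = 1/(n - t), for every message.\<close>
definition sender_anonymous ::
  "(nat \<Rightarrow> nat \<Rightarrow> 'm option \<Rightarrow> (nat set \<Rightarrow> bool) \<Rightarrow> 'c list list \<Rightarrow> 'c)
   \<Rightarrow> nat \<Rightarrow> nat \<Rightarrow> nat set set \<Rightarrow> nat set \<Rightarrow> 'm set \<Rightarrow> bool" where
  "sender_anonymous P R n E T M \<longleftrightarrow>
     (\<forall>m\<in>M. (SUP S. guess_prob P R n E T m S) = 1 / real (n - card T))"

definition disconnects :: "nat \<Rightarrow> nat set set \<Rightarrow> nat set \<Rightarrow> bool" where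
  "disconnects n E T \<longleftrightarrow>
     (\<exists>A B. A \<noteq> {} \<and> B \<noteq> {} \<and> A \<inter> B = {} \<and> A \<union> B = {0..<n} - T \<and>
            (\<forall>a\<in>A. \<forall>b\<in>B. {a, b} \<notin> E))"

end

theory Submission
  imports Defs
begin

(*
  Let A and B be the two sides of the cut, a in A and b in B.  For an input assignment,
  count the key assignments under which the coalition observes x (the public transcript
  together with its own key bits); with uniform keys this is proportional to the
  probability of x.  Anonymity forces equal counts whether a or b is the sender.
  No key is shared between A and B, and the coalition's key bits fix every key between
  T and B, so two runs with the same observation may exchange their B-sides (inputs and
  keys on edges at B) and still produce that observation.  Splicing a run in which a
  sends with one in which b sends gives a run in which both hold the message and one in
  which nobody does, hence c_a(x)^2 <= c_ab(x) c_none(x).  All these counts sum to the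
  number of key assignments, so AM-GM forces c_a = c_none.  The silent run does not
  depend on the message, hence neither does the coalition's view when a sends,
  contradicting that the message can be decoded from the transcript.
*)

lemma pair_pmf_of_set:
  assumes "finite A" "A \<noteq> {}" "finite B" "B \<noteq> {}"
  shows "pair_pmf (pmf_of_set A) (pmf_of_set B) = pmf_of_set (A \<times> B)"
  by (rule pmf_eqI) (auto simp: pmf_pair indicator_def card_cartesian_product assms)

lemma square_le_mult_imp_double_le_add:
  fixes p q r :: "'a::linordered_idom"
  assumes "p * p \<le> q * r" "0 \<le> q" "0 \<le> r"
  shows "2 * p \<le> q + r"
proof -
  have "(2 * p)\<^sup>2 \<le> (q + r)\<^sup>2"
    using assms(1) zero_le_power2[of "q - r"] by (simp add: power2_eq_square algebra_simps)
  then have "\<bar>2 * p\<bar> \<le> q + r"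
    using abs_le_square_iff[of "2 * p" "q + r"] assms(2,3) by simp
  then show ?thesis by linarith
qed

lemma am_gm_sum_equality:
  fixes p q r :: "'b \<Rightarrow> 'a::linordered_idom"
  assumes "finite F"
    and square_le: "\<And>x. x \<in> F \<Longrightarrow> p x * p x \<le> q x * r x"
    and nonneg: "\<And>x. x \<in> F \<Longrightarrow> 0 \<le> q x \<and> 0 \<le> r x"
    and sum_p: "sum p F = sum r F" and sum_q: "sum q F = sum r F"
    and "x \<in> F"
  shows "p x = r x"
proof -
  have "(\<Sum>x\<in>F. 2 * p x) = (\<Sum>x\<in>F. q x + r x)"
    by (simp only: sum.distrib sum_q flip: sum_distrib_left sum_p)
  moreover have "2 * p y \<le> q y + r y" if "y \<in> F" for y
    using square_le_mult_imp_double_le_add square_le nonneg that by blast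
  ultimately have double_eq: "2 * p x = q x + r x"
    using \<open>x \<in> F\<close> \<open>finite F\<close> by (rule sum_mono_inv)
  have "(q x - r x)\<^sup>2 = (q x + r x)\<^sup>2 - 4 * (q x * r x)"
    by algebra
  also have "\<dots> = 4 * (p x * p x - q x * r x)"
    by (simp flip: double_eq add: power2_eq_square algebra_simps)
  also have "\<dots> \<le> 0"
    using square_le[OF \<open>x \<in> F\<close>] by simp
  finally show ?thesis
    using double_eq by simp
qed

lemma key_graph_finite: "key_graph n E \<Longrightarrow> finite E"
  by (rule finite_subset[of _ "Pow {0..<n}"]) (auto simp: key_graph_def)

lemma finite_key_assignments:
  assumes "finite E"
  shows "finite (key_assignments E)"
proof -
  have "key_assignments E \<subseteq> (\<lambda>S e. e \<in> S) ` Pow E"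
  proof
    fix \<kappa> assume "\<kappa> \<in> key_assignments E"
    then have "\<kappa> = (\<lambda>e. e \<in> {e \<in> E. \<kappa> e})"
      by (auto simp: key_assignments_def)
    then show "\<kappa> \<in> (\<lambda>S e. e \<in> S) ` Pow E"
      by blast
  qed
  then show ?thesis
    using assms by (simp add: finite_subset)
qed

lemma const_False_in_key_assignments: "(\<lambda>_. False) \<in> key_assignments E"
  by (simp add: key_assignments_def)

fun protocol_run ::
  "(nat \<Rightarrow> nat \<Rightarrow> 'm option \<Rightarrow> (nat set \<Rightarrow> bool) \<Rightarrow> 'c list list \<Rightarrow> 'c)
   \<Rightarrow> nat \<Rightarrow> nat set set \<Rightarrow> (nat \<Rightarrow> 'm option) \<Rightarrow> (nat set \<Rightarrow> bool) \<Rightarrow> nat \<Rightarrow> 'c list list" where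
  "protocol_run P n E inp \<kappa> 0 = []"
| "protocol_run P n E inp \<kappa> (Suc k) =
     (let h = protocol_run P n E inp \<kappa> k
      in h @ [map (\<lambda>i. P k i (inp i) (key_view E \<kappa> i) h) [0..<n]])"

definition inputs_on :: "nat set \<Rightarrow> 'm \<Rightarrow> nat \<Rightarrow> 'm option" where
  "inputs_on S m = (\<lambda>i. if i \<in> S then Some m else None)"

lemma transcript_eq_protocol_run:
  "transcript P n E s m \<kappa> R = protocol_run P n E (inputs_on {s} m) \<kappa> R"
  by (induction R) (simp_all add: inputs_on_def Let_def)

definition view_count ::
  "(nat \<Rightarrow> nat \<Rightarrow> 'm option \<Rightarrow> (nat set \<Rightarrow> bool) \<Rightarrow> 'c list list \<Rightarrow> 'c)
   \<Rightarrow> nat \<Rightarrow> nat \<Rightarrow> nat set set \<Rightarrow> nat set \<Rightarrow> (nat \<Rightarrow> 'm option)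
   \<Rightarrow> 'c list list \<times> (nat set \<Rightarrow> bool) \<Rightarrow> nat" where
  "view_count P R n E T inp x =
     card {\<kappa> \<in> key_assignments E. (protocol_run P n E inp \<kappa> R, coalition_view E T \<kappa>) = x}"

lemma sum_view_count:
  assumes "finite E" "finite F"
    and "(\<lambda>\<kappa>. (protocol_run P n E inp \<kappa> R, coalition_view E T \<kappa>)) ` key_assignments E \<subseteq> F"
  shows "(\<Sum>x\<in>F. view_count P R n E T inp x) = card (key_assignments E)"
  unfolding view_count_def card_eq_sum
  by (rule sum.group[OF finite_key_assignments[OF assms(1)] assms(2,3)])

lemma guess_prob_eq_card:
  assumes "finite E" "{0..<n} - T \<noteq> {}"
  shows "guess_prob P R n E T m S =
    card {(s, \<kappa>) \<in> ({0..<n} - T) \<times> key_assignments E.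
            S (transcript P n E s m \<kappa> R) (coalition_view E T \<kappa>) = s}
    / (card ({0..<n} - T) * card (key_assignments E))" (is "_ = card ?W / _")
proof -
  let ?U = "{0..<n} - T" and ?K = "key_assignments E"
  let ?f = "\<lambda>(s, \<kappa>). (s, transcript P n E s m \<kappa> R, coalition_view E T \<kappa>)"
  have UK: "finite ?U" "?U \<noteq> {}" "finite ?K" "?K \<noteq> {}"
    using assms const_False_in_key_assignments finite_key_assignments by auto
  then have "adv_experiment P R n E T m = map_pmf ?f (pair_pmf (pmf_of_set ?U) (pmf_of_set ?K))"
    by (simp add: adv_experiment_def pair_pmf_def map_bind_pmf map_return_pmf)
  also have "\<dots> = map_pmf ?f (pmf_of_set (?U \<times> ?K))"
    using UK by (simp add: pair_pmf_of_set)
  finally have "guess_prob P R n E T m S = measure_pmf.prob (pmf_of_set (?U \<times> ?K)) (?f -` {(s, C, g). S C g = s})"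
    by (simp add: guess_prob_def)
  also have "\<dots> = card ?W / card (?U \<times> ?K)"
    using UK by (subst measure_pmf_of_set) (auto intro!: arg_cong[where f = card])
  finally show ?thesis
    by (simp add: card_cartesian_product)
qed

lemma inverse_card_less_guess_prob_iff:
  assumes "finite E" "{0..<n} - T \<noteq> {}"
  shows "1 / card ({0..<n} - T) < guess_prob P R n E T m S \<longleftrightarrow>
    card (key_assignments E) < card {(s, \<kappa>) \<in> ({0..<n} - T) \<times> key_assignments E.
                                      S (transcript P n E s m \<kappa> R) (coalition_view E T \<kappa>) = s}"
    (is "_ \<longleftrightarrow> card ?K < card ?W")
proof -
  let ?U = "{0..<n} - T"
  have pos: "0 < card ?U" "0 < card ?K"
    using assms finite_key_assignments const_False_in_key_assignments by (auto simp: card_gt_0_iff)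
  then have "1 / card ?U = card ?K / (card ?U * card ?K)"
    by simp
  then show ?thesis
    unfolding guess_prob_eq_card[OF assms] using pos assms(2)
    by (simp only: divide_less_cancel) (simp add: mult_less_0_iff)
qed

lemma view_count_le_if_guess_prob_bounded:
  assumes "finite E"
    and u: "u \<in> {0..<n} - T" and v: "v \<in> {0..<n} - T" "u \<noteq> v"
    and bound: "\<And>S. guess_prob P R n E T m S \<le> 1 / card ({0..<n} - T)"
  shows "view_count P R n E T (inputs_on {u} m) x \<le> view_count P R n E T (inputs_on {v} m) x"
proof (rule ccontr)
  let ?U = "{0..<n} - T" and ?K = "key_assignments E"
  define N where "N s = {\<kappa> \<in> ?K. (transcript P n E s m \<kappa> R, coalition_view E T \<kappa>) = x}" for s
  assume "\<not> ?thesis"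
  then have more: "card (N v) < card (N u)"
    by (simp add: view_count_def N_def transcript_eq_protocol_run)
  define S where "S C g = (if (C, g) = x then u else v)" for C g
  define W where "W = {(s, \<kappa>) \<in> ?U \<times> ?K. S (transcript P n E s m \<kappa> R) (coalition_view E T \<kappa>) = s}"
  have fin: "finite ?K" "finite ?U" "?U \<noteq> {}"
    using finite_key_assignments[OF assms(1)] u by auto
  have "finite W"
    using fin by (auto simp: W_def intro: finite_subset[of _ "?U \<times> ?K"])
  have "card ({u} \<times> N u) + card ({v} \<times> (?K - N v)) = card ({u} \<times> N u \<union> {v} \<times> (?K - N v))"
    using fin \<open>u \<noteq> v\<close> by (intro card_Un_disjoint[symmetric]) (auto simp: N_def)
  also have "\<dots> \<le> card W"
    using u v \<open>finite W\<close> by (intro card_mono) (auto simp: S_def N_def W_def)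
  finally have "card ({u} \<times> N u) + card ({v} \<times> (?K - N v)) \<le> card W" .
  moreover have "card ({v} \<times> (?K - N v)) = card ?K - card (N v)"
    using fin by (simp add: N_def card_Diff_subset)
  moreover have "card (N v) \<le> card ?K"
    using fin by (auto simp: N_def intro: card_mono)
  ultimately have "card ?K < card W"
    using more by (simp add: card_cartesian_product)
  then have "1 / card ?U < guess_prob P R n E T m S"
    using fin by (simp add: inverse_card_less_guess_prob_iff[OF assms(1)] W_def)
  with bound[of S] show False
    by simp
qed

lemma sender_anonymous_view_count_eq:
  assumes "sender_anonymous P R n E T M" "m \<in> M" "T \<subseteq> {0..<n}" "finite E"
    and "u \<in> {0..<n} - T" "v \<in> {0..<n} - T"
  shows "view_count P R n E T (inputs_on {u} m) = view_count P R n E T (inputs_on {v} m)"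
proof (cases "u = v")
  case False
  have bound: "guess_prob P R n E T m S \<le> 1 / card ({0..<n} - T)" for S
  proof -
    have "guess_prob P R n E T m S \<le> (SUP S. guess_prob P R n E T m S)"
      by (rule cSUP_upper) (auto simp: guess_prob_def bdd_above_def intro!: exI[of _ 1])
    then show ?thesis
      using assms(1-3) by (simp add: sender_anonymous_def card_Diff_subset finite_subset)
  qed
  note le = view_count_le_if_guess_prob_bounded[OF assms(4) _ _ _ bound]
  show ?thesis
    using le[OF assms(5,6) False] le[OF assms(6,5)] False by (intro ext antisym) auto
qed simp

definition splice_keys :: "nat set \<Rightarrow> (nat set \<Rightarrow> bool) \<Rightarrow> (nat set \<Rightarrow> bool) \<Rightarrow> nat set \<Rightarrow> bool" where
  "splice_keys B \<kappa>1 \<kappa>2 = (\<lambda>e. if e \<inter> B \<noteq> {} then \<kappa>2 e else \<kappa>1 e)"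

definition splice_inputs :: "nat set \<Rightarrow> (nat \<Rightarrow> 'm option) \<Rightarrow> (nat \<Rightarrow> 'm option) \<Rightarrow> nat \<Rightarrow> 'm option" where
  "splice_inputs B inp1 inp2 = (\<lambda>i. if i \<in> B then inp2 i else inp1 i)"

lemma splice_keys_in_key_assignments:
  "\<kappa>1 \<in> key_assignments E \<Longrightarrow> \<kappa>2 \<in> key_assignments E \<Longrightarrow> splice_keys B \<kappa>1 \<kappa>2 \<in> key_assignments E"
  by (simp add: key_assignments_def splice_keys_def)

lemma splice_keys_splice_keys: "splice_keys B (splice_keys B \<kappa>1 \<kappa>2) (splice_keys B \<kappa>2 \<kappa>1) = \<kappa>1"
  by (auto simp: splice_keys_def)

lemma coalition_view_splice_keys:
  "coalition_view E T \<kappa>1 = coalition_view E T \<kappa>2 \<Longrightarrow>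
   coalition_view E T (splice_keys B \<kappa>1 \<kappa>2) = coalition_view E T \<kappa>1"
  by (simp add: coalition_view_def splice_keys_def fun_eq_iff) metis

locale key_graph_separation =
  fixes n :: nat and E :: "nat set set" and T A B :: "nat set"
  assumes key_graph: "key_graph n E"
    and disjoint: "A \<inter> B = {}"
    and cover: "A \<union> B = {0..<n} - T"
    and no_edge: "\<And>a b. a \<in> A \<Longrightarrow> b \<in> B \<Longrightarrow> {a, b} \<notin> E"
begin

lemma key_view_splice_keys:
  assumes "i < n" "coalition_view E T \<kappa>1 = coalition_view E T \<kappa>2"
  shows "key_view E (splice_keys B \<kappa>1 \<kappa>2) i = (if i \<in> B then key_view E \<kappa>2 i else key_view E \<kappa>1 i)"
proof (cases "i \<in> B")
  case False
  have "\<kappa>1 e = \<kappa>2 e" if e: "e \<in> E" "i \<in> e" "e \<inter> B \<noteq> {}" for e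
  proof -
    obtain b where b: "b \<in> e" "b \<in> B"
      using e(3) by blast
    obtain x y where "e = {x, y}"
      using key_graph \<open>e \<in> E\<close> by (auto simp: key_graph_def)
    then have "e = {i, b}"
      using b \<open>i \<in> e\<close> \<open>i \<notin> B\<close> by auto
    then have "i \<notin> A \<union> B"
      using no_edge[of i b] b \<open>e \<in> E\<close> \<open>i \<notin> B\<close> by auto
    then have "i \<in> T"
      using cover \<open>i < n\<close> by auto
    then show ?thesis
      using fun_cong[OF assms(2), of e] e \<open>i \<in> T\<close> by (auto simp: coalition_view_def split: if_splits)
  qed
  then show ?thesis
    using False by (auto simp: key_view_def splice_keys_def)
qed (auto simp: key_view_def splice_keys_def)

text \<open>Players in A see only keys of \<kappa>1, players in B only keys of \<kappa>2, and players in T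
  cannot tell the two apart; so if both runs produce the same transcript, every player
  acts in the spliced run as in the run whose keys it sees.\<close>

lemma protocol_run_splice:
  assumes "coalition_view E T \<kappa>1 = coalition_view E T \<kappa>2"
    and "protocol_run P n E inp1 \<kappa>1 k = protocol_run P n E inp2 \<kappa>2 k"
  shows "protocol_run P n E (splice_inputs B inp1 inp2) (splice_keys B \<kappa>1 \<kappa>2) k = protocol_run P n E inp1 \<kappa>1 k"
  using assms(2)
proof (induction k)
  case (Suc k)
  let ?h = "protocol_run P n E inp1 \<kappa>1 k"
  have history: "?h = protocol_run P n E inp2 \<kappa>2 k"
    using Suc.prems by (simp add: Let_def)
  have round: "map (\<lambda>i. P k i (inp1 i) (key_view E \<kappa>1 i) ?h) [0..<n]
             = map (\<lambda>i. P k i (inp2 i) (key_view E \<kappa>2 i) ?h) [0..<n]"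
    using Suc.prems by (simp add: Let_def flip: history)
  have "P k i (splice_inputs B inp1 inp2 i) (key_view E (splice_keys B \<kappa>1 \<kappa>2) i) ?h
      = P k i (inp1 i) (key_view E \<kappa>1 i) ?h" if "i < n" for i
    using key_view_splice_keys[OF that assms(1)] nth_map_upt[of i n 0] arg_cong[OF round, of "\<lambda>xs. xs ! i"] that
    by (simp add: splice_inputs_def)
  then show ?case
    using Suc.IH[OF history] by (simp add: Let_def)
qed simp

lemma view_count_mult_le_splice:
  "view_count P R n E T inp1 x * view_count P R n E T inp2 x
   \<le> view_count P R n E T (splice_inputs B inp1 inp2) x * view_count P R n E T (splice_inputs B inp2 inp1) x"
proof -
  define N where "N inp = {\<kappa> \<in> key_assignments E. (protocol_run P n E inp \<kappa> R, coalition_view E T \<kappa>) = x}" for inp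
  let ?swap = "\<lambda>(\<kappa>1, \<kappa>2). (splice_keys B \<kappa>1 \<kappa>2, splice_keys B \<kappa>2 \<kappa>1)"
  have "inj_on ?swap (N inp1 \<times> N inp2)"
    by (rule inj_on_inverseI[where g = ?swap]) (auto simp: splice_keys_splice_keys)
  moreover have "?swap ` (N inp1 \<times> N inp2) \<subseteq> N (splice_inputs B inp1 inp2) \<times> N (splice_inputs B inp2 inp1)"
    by (auto simp: N_def protocol_run_splice coalition_view_splice_keys splice_keys_in_key_assignments)
  moreover have "finite (N (splice_inputs B inp1 inp2) \<times> N (splice_inputs B inp2 inp1))"
    using finite_key_assignments[OF key_graph_finite[OF key_graph]] by (simp add: N_def)
  ultimately have "card (N inp1 \<times> N inp2) \<le> card (N (splice_inputs B inp1 inp2) \<times> N (splice_inputs B inp2 inp1))"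
    by (intro card_inj_on_le)
  then show ?thesis
    by (simp add: view_count_def N_def card_cartesian_product)
qed

lemma view_count_sender_eq_silent:
  assumes a: "a \<in> A" and b: "b \<in> B"
    and sender_eq: "view_count P R n E T (inputs_on {a} m) = view_count P R n E T (inputs_on {b} m)"
  shows "view_count P R n E T (inputs_on {a} m) = view_count P R n E T (inputs_on {} m)"
proof
  fix x
  let ?K = "key_assignments E"
  let ?c = "\<lambda>S x. int (view_count P R n E T (inputs_on S m) x)"
  let ?obs = "\<lambda>S \<kappa>. (protocol_run P n E (inputs_on S m) \<kappa> R, coalition_view E T \<kappa>)"
  define F where "F = ?obs {a} ` ?K \<union> ?obs {a, b} ` ?K \<union> ?obs {} ` ?K"
  have "finite E"
    using key_graph_finite[OF key_graph] .
  then have "finite F"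
    by (simp add: F_def finite_key_assignments)
  have "splice_inputs B (inputs_on {a} m) (inputs_on {b} m) = inputs_on {a, b} m"
       "splice_inputs B (inputs_on {b} m) (inputs_on {a} m) = inputs_on {} m"
    using a b disjoint by (auto simp: splice_inputs_def inputs_on_def fun_eq_iff)
  then have square_le: "?c {a} y * ?c {a} y \<le> ?c {a, b} y * ?c {} y" for y
    using view_count_mult_le_splice[of P R "inputs_on {a} m" y "inputs_on {b} m"] sender_eq
    by (simp flip: of_nat_mult)
  have sum: "(\<Sum>y\<in>F. ?c S y) = card ?K" if "?obs S ` ?K \<subseteq> F" for S
    using sum_view_count[OF \<open>finite E\<close> \<open>finite F\<close> that] by (simp flip: of_nat_sum)
  show "view_count P R n E T (inputs_on {a} m) x = view_count P R n E T (inputs_on {} m) x"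
  proof (cases "x \<in> F")
    case True
    have "?c {a} x = ?c {} x"
      using am_gm_sum_equality[of F "?c {a}" "?c {a, b}" "?c {}", OF \<open>finite F\<close> square_le _ _ _ True]
        sum[of "{a}"] sum[of "{a, b}"] sum[of "{}"] by (auto simp: F_def)
    then show ?thesis
      by simp
  next
    case False
    then have "x \<notin> ?obs {a} ` ?K" "x \<notin> ?obs {} ` ?K"
      by (auto simp: F_def)
    then show ?thesis
      by (auto simp: view_count_def intro!: arg_cong[where f = card])
  qed
qed

end

lemma disconnectsE:
  assumes "key_graph n E" "disconnects n E T"
  obtains A B a b where "key_graph_separation n E T A B" "a \<in> A" "b \<in> B"
    and "a \<in> {0..<n} - T" "b \<in> {0..<n} - T"
proof -
  obtain A B where "A \<noteq> {}" "B \<noteq> {}" "A \<inter> B = {}" "A \<union> B = {0..<n} - T"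
    and "\<forall>a\<in>A. \<forall>b\<in>B. {a, b} \<notin> E"
    using assms(2) unfolding disconnects_def by blast
  moreover obtain a b where "a \<in> A" "b \<in> B"
    using \<open>A \<noteq> {}\<close> \<open>B \<noteq> {}\<close> by blast
  ultimately show ?thesis
    using assms(1) by (intro that[of A B a b]) (auto simp: key_graph_separation_def)
qed

lemma transmits_view_count_inj:
  assumes "transmits P R n E M" "finite E" "s < n" "m1 \<in> M" "m2 \<in> M"
    and "view_count P R n E T (inputs_on {s} m1) = view_count P R n E T (inputs_on {s} m2)"
  shows "m1 = m2"
proof -
  let ?K = "key_assignments E"
  let ?obs = "\<lambda>m \<kappa>. (transcript P n E s m \<kappa> R, coalition_view E T \<kappa>)"
  obtain dec where dec: "\<And>m \<kappa>. m \<in> M \<Longrightarrow> \<kappa> \<in> ?K \<Longrightarrow> dec (transcript P n E s m \<kappa> R) = m"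
    using assms(1,3) by (auto simp: transmits_def)
  have "card {\<kappa> \<in> ?K. ?obs m2 \<kappa> = ?obs m1 (\<lambda>_. False)} = card {\<kappa> \<in> ?K. ?obs m1 \<kappa> = ?obs m1 (\<lambda>_. False)}"
    using fun_cong[OF assms(6), of "?obs m1 (\<lambda>_. False)"]
    by (simp add: view_count_def transcript_eq_protocol_run)
  also have "\<dots> > 0"
    using finite_key_assignments[OF assms(2)] const_False_in_key_assignments
    by (subst card_gt_0_iff) auto
  finally obtain \<kappa> where "\<kappa> \<in> ?K" "transcript P n E s m2 \<kappa> R = transcript P n E s m1 (\<lambda>_. False) R"
    by (auto simp: card_gt_0_iff)
  then show ?thesis
    using dec[OF assms(5)] dec[OF assms(4) const_False_in_key_assignments] by metis
qed

theorem mainTheorem2: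
  fixes P :: "nat \<Rightarrow> nat \<Rightarrow> 'm option \<Rightarrow> (nat set \<Rightarrow> bool) \<Rightarrow> 'c list list \<Rightarrow> 'c"
    and R n :: nat and E :: "nat set set" and T :: "nat set" and M :: "'m set"
  assumes "key_graph n E"
    and "T \<subseteq> {0..<n}"
    and "\<exists>m1\<in>M. \<exists>m2\<in>M. m1 \<noteq> m2"
    and "transmits P R n E M"
    and "disconnects n E T"
  shows "\<not> sender_anonymous P R n E T M"
proof
  assume anonymous: "sender_anonymous P R n E T M"
  obtain m1 m2 where m: "m1 \<in> M" "m2 \<in> M" "m1 \<noteq> m2"
    using assms(3) by blast
  obtain A B a b where separation: "key_graph_separation n E T A B" and a: "a \<in> A" and b: "b \<in> B"
    and honest: "a \<in> {0..<n} - T" "b \<in> {0..<n} - T"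
    using disconnectsE[OF assms(1,5)] .
  have "finite E"
    using key_graph_finite[OF assms(1)] .
  have sender_eq_silent: "view_count P R n E T (inputs_on {a} m) = view_count P R n E T (inputs_on {} m)"
    if "m \<in> M" for m
    by (rule key_graph_separation.view_count_sender_eq_silent[OF separation a b
          sender_anonymous_view_count_eq[OF anonymous that assms(2) \<open>finite E\<close> honest]])
  \<comment> \<open>inputs_on {} m does not depend on m\<close>
  have "view_count P R n E T (inputs_on {a} m1) = view_count P R n E T (inputs_on {a} m2)"
    using sender_eq_silent[OF m(1)] sender_eq_silent[OF m(2)] by (simp add: inputs_on_def)
  moreover have "a < n"
    using honest by simp
  ultimately have "m1 = m2"
    using transmits_view_count_inj[OF assms(4) \<open>finite E\<close> _ m(1,2)] by blast
  with m show False
    by simp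
qed

end
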